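(* Let $Z$ be an extremal assignment of order $n$. For each $G\in S_2(n)$ with $Z(G)\neq\emptyset$, let $B_G$ be the set of labels of the leaves adjacent to the (unique) assigned vertex of $G$. Then $\mathcal{C}=\{B_G: G\in S_2(n),\ Z(G)\ne\emptyset\}$ is a contraction indicator.
   Context: $[n]=\{1,\dots,n\}$. A stable $n$-labeled tree is a finite tree with $n$ leaves labeled bijectively by $[n]$, all internal vertices of degree $\ge 3$; $V(G)$ its internal vertices; $S(n)$ the set of such trees up to label-preserving isomorphism and $S_2(n)$ those with exactly 2 internal vertices. $G\rightsquigarrow G'$: $G'$ obtained by collapsing connected sets of internal vertices, inducing surjection $\pi:V(G)\to V(G')$. An extremal assignment of order $n$: rule $Z(G)\subset V(G)$ for $G\in S(n)$ with (a) $Z(G)\ne V(G)$, (b) if $G\rightsquigarrow G'$ and $\pi^{-1}(v')=\{v_1,\dots,v_k\}$ then $v'\in Z(G')\iff v_1,\dots,v_k\in Z(G)$. A contraction indicator is a collection $\mathcal{C}$ of subsets of $[n]$ such that (1) $2\le|B|\le n-2$ for every $B\in\mathcal{C}$; (2) if $B\in\mathcal{C}$ and $B'\subset B$ with $|B'|\ge 2$ then $B'\in\mathcal{C}$; (3) $B_1\cup B_2\ne[n]$ for all $B_1,B_2\in\mathcal{C}$. *)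

theory Defs
  imports Main
begin

text \<open>Vertices of a labeled tree: leaves carry their label, internal vertices carry a name.\<close>
datatype node = Leaf nat | Inner nat

text \<open>A graph is given by its set of undirected edges (2-element sets of nodes);
its vertex set is the union of the edges.\<close>

definition adj :: "node set set \<Rightarrow> (node \<times> node) set" where
  "adj E = {(x, y). {x, y} \<in> E}"

definition deg :: "node set set \<Rightarrow> node \<Rightarrow> nat" where
  "deg E x = card {e \<in> E. x \<in> e}"

definition inner :: "node set set \<Rightarrow> nat set" where
  "inner E = {v. Inner v \<in> \<Union>E}"

definition connected_on :: "node set set \<Rightarrow> node set \<Rightarrow> bool" where
  "connected_on E S \<longleftrightarrow> (\<forall>x\<in>S. \<forall>y\<in>S. (x, y) \<in> (adj E \<inter> (S \<times> S))\<^sup>*)"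

definition is_tree :: "node set set \<Rightarrow> bool" where
  "is_tree E \<longleftrightarrow> finite E \<and> (\<forall>e\<in>E. card e = 2) \<and> connected_on E (\<Union>E)
      \<and> card E + 1 = card (\<Union>E)"

definition stable_tree :: "nat \<Rightarrow> node set set \<Rightarrow> bool" where
  "stable_tree n E \<longleftrightarrow> is_tree E \<and> {i. Leaf i \<in> \<Union>E} = {1..n}
      \<and> (\<forall>i\<in>{1..n}. deg E (Leaf i) = 1)
      \<and> (\<forall>v\<in>inner E. deg E (Inner v) \<ge> 3)"

fun lift :: "(nat \<Rightarrow> nat) \<Rightarrow> node \<Rightarrow> node" where
  "lift \<pi> (Leaf i) = Leaf i"
| "lift \<pi> (Inner v) = Inner (\<pi> v)"

definition contracts :: "nat \<Rightarrow> node set set \<Rightarrow> node set set \<Rightarrow> (nat \<Rightarrow> nat) \<Rightarrow> bool" where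
  "contracts n E E' \<pi> \<longleftrightarrow> stable_tree n E \<and> stable_tree n E'
     \<and> \<pi> ` inner E = inner E'
     \<and> (\<forall>v'\<in>inner E'. connected_on E (Inner ` {v \<in> inner E. \<pi> v = v'}))
     \<and> E' = {lift \<pi> ` e | e. e \<in> E \<and> card (lift \<pi> ` e) = 2}"

definition extremal_assignment :: "nat \<Rightarrow> (node set set \<Rightarrow> nat set) \<Rightarrow> bool" where
  "extremal_assignment n Z \<longleftrightarrow>
     (\<forall>E. stable_tree n E \<longrightarrow> Z E \<subseteq> inner E \<and> Z E \<noteq> inner E)
   \<and> (\<forall>E E' \<pi>. contracts n E E' \<pi> \<longrightarrow>
        (\<forall>v'\<in>inner E'. v' \<in> Z E' \<longleftrightarrow> (\<forall>v\<in>inner E. \<pi> v = v' \<longrightarrow> v \<in> Z E)))"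

definition contraction_indicator :: "nat \<Rightarrow> nat set set \<Rightarrow> bool" where
  "contraction_indicator n C \<longleftrightarrow>
     (\<forall>B\<in>C. B \<subseteq> {1..n} \<and> 2 \<le> card B \<and> card B \<le> n - 2)
   \<and> (\<forall>B\<in>C. \<forall>B'. B' \<subseteq> B \<and> 2 \<le> card B' \<longrightarrow> B' \<in> C)
   \<and> (\<forall>B1\<in>C. \<forall>B2\<in>C. B1 \<union> B2 \<noteq> {1..n})"

end

theory Submission
  imports Defs
begin

text \<open>
  A stable tree with two internal vertices is determined by the split of the leaves between
  them, and renaming the internal vertices is a contraction; so the members of the family
  are exactly the sets \<open>B\<close> for which vertex \<open>0\<close> is assigned in the tree with internal
  vertices \<open>0\<close>, \<open>1\<close> and leaves \<open>B\<close> at \<open>0\<close>. For \<open>B' \<subset> B\<close> the tree with internal path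
  \<open>0 - 1 - 2\<close> carrying the leaves \<open>B'\<close>, \<open>B - B'\<close> and the complement of \<open>B\<close> contracts onto
  the two-vertex trees of \<open>B\<close> and of \<open>B'\<close>: the assignment pulls back along the first
  contraction to the vertices \<open>0, 1\<close> and pushes forward along the second. If \<open>B\<^sub>1 \<union> B\<^sub>2\<close>
  covered all leaves, then either the two sets are complementary and both internal vertices of
  one tree are assigned, or the analogous three-vertex tree for the complement of \<open>B\<^sub>2\<close>,
  \<open>B\<^sub>1 \<inter> B\<^sub>2\<close> and the complement of \<open>B\<^sub>1\<close> gets all three vertices assigned; both
  contradict \<open>Z(G) \<noteq> V(G)\<close>.
\<close>

subsection \<open>Stable trees\<close>

lemma in_adj_iff: "(p, q) \<in> adj E \<longleftrightarrow> {p, q} \<in> E"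
  unfolding adj_def by auto

lemma connected_on_from_root:
  assumes "\<forall>z\<in>\<Union>E. (r, z) \<in> (adj E)\<^sup>*"
  shows "connected_on E (\<Union>E)"
proof -
  have restrict: "adj E \<inter> (\<Union>E \<times> \<Union>E) = adj E"
    unfolding adj_def by auto
  have "sym ((adj E)\<^sup>*)"
    by (rule sym_rtrancl) (auto simp: sym_def in_adj_iff insert_commute)
  then show ?thesis
    unfolding connected_on_def restrict using assms by (meson rtrancl_trans symD)
qed

lemma connected_on_singleton: "connected_on E {p}"
  unfolding connected_on_def by auto

lemma connected_on_edge: "{p, q} \<in> E \<Longrightarrow> connected_on E {p, q}"
  unfolding connected_on_def by (auto simp: in_adj_iff insert_commute intro!: r_into_rtrancl)

lemma rtrancl_adj_edge: "{p, q} \<in> E \<Longrightarrow> (p, q) \<in> (adj E)\<^sup>*"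
  by (simp add: in_adj_iff r_into_rtrancl)

lemma rtrancl_adj_edge_step:
  "(r, p) \<in> (adj E)\<^sup>* \<Longrightarrow> {p, q} \<in> E \<Longrightarrow> (r, q) \<in> (adj E)\<^sup>*"
  by (simp add: in_adj_iff rtrancl_into_rtrancl)

lemma sum_card_incident_edges:
  assumes "finite E" "\<forall>e\<in>E. finite e"
  shows "(\<Sum>x\<in>\<Union>E. card {e \<in> E. x \<in> e}) = (\<Sum>e\<in>E. card e)"
proof -
  have "(\<Sum>x\<in>\<Union>E. card {e \<in> E. x \<in> e}) = (\<Sum>x\<in>\<Union>E. \<Sum>e\<in>E. if x \<in> e then 1 else 0)"
    using assms(1) by (simp add: sum.inter_filter[symmetric])
  also have "\<dots> = (\<Sum>e\<in>E. \<Sum>x\<in>\<Union>E. if x \<in> e then 1 else 0)"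
    by (rule sum.swap)
  also have "\<dots> = (\<Sum>e\<in>E. card {x \<in> \<Union>E. x \<in> e})"
    using assms by (simp add: sum.inter_filter[symmetric])
  also have "\<dots> = (\<Sum>e\<in>E. card e)"
    by (rule sum.cong) (auto intro: arg_cong[where f = card])
  finally show ?thesis .
qed

lemma stable_tree_vertices:
  assumes "stable_tree n E"
  shows "\<Union>E = Leaf ` {1..n} \<union> Inner ` inner E"
proof (rule set_eqI)
  fix z
  show "z \<in> \<Union>E \<longleftrightarrow> z \<in> Leaf ` {1..n} \<union> Inner ` inner E"
    using assms by (cases z) (auto simp: stable_tree_def inner_def)
qed

lemma stable_tree_finite:
  assumes "stable_tree n E"
  shows "finite E" "\<forall>e\<in>E. card e = 2" "finite (inner E)"
proof -
  show "finite E" "\<forall>e\<in>E. card e = 2"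
    using assms unfolding stable_tree_def is_tree_def by auto
  then have "finite (\<Union>E)"
    by (metis card.infinite finite_Union zero_neq_numeral)
  moreover have "inner E = Inner -` \<Union>E"
    unfolding inner_def by auto
  ultimately show "finite (inner E)"
    by (simp add: finite_vimageI inj_def)
qed

lemma stable_tree_card_edges:
  assumes "stable_tree n E"
  shows "card E + 1 = n + card (inner E)"
proof -
  have "card (\<Union>E) = n + card (inner E)"
    unfolding stable_tree_vertices[OF assms] using stable_tree_finite(3)[OF assms]
    by (subst card_Un_disjoint) (auto simp: card_image inj_on_def)
  then show ?thesis
    using assms unfolding stable_tree_def is_tree_def by simp
qed

lemma stable_tree_inner_degree_sum:
  assumes "stable_tree n E"
  shows "(\<Sum>v\<in>inner E. deg E (Inner v)) + 2 = n + 2 * card (inner E)"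
proof -
  note finite = stable_tree_finite[OF assms]
  have "(\<Sum>x\<in>\<Union>E. deg E x) = 2 * card E"
    using sum_card_incident_edges[of E] finite unfolding deg_def
    by (simp add: card_ge_0_finite)
  also have "(\<Sum>x\<in>\<Union>E. deg E x) = (\<Sum>i\<in>{1..n}. deg E (Leaf i)) + (\<Sum>v\<in>inner E. deg E (Inner v))"
    unfolding stable_tree_vertices[OF assms] using finite(3)
    by (subst sum.union_disjoint) (auto simp: sum.reindex inj_on_def)
  also have "(\<Sum>i\<in>{1..n}. deg E (Leaf i)) = n"
    using assms unfolding stable_tree_def by simp
  finally show ?thesis
    using stable_tree_card_edges[OF assms] by simp
qed

lemma stable_treeI:
  assumes "finite E" "\<forall>e\<in>E. card e = 2" "\<forall>z\<in>\<Union>E. (r, z) \<in> (adj E)\<^sup>*"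
    and vertices: "\<Union>E = Leaf ` {1..n} \<union> Inner ` V" and "finite V"
    and "card E + 1 = n + card V"
    and "\<forall>i\<in>{1..n}. deg E (Leaf i) = 1" "\<forall>v\<in>V. 3 \<le> deg E (Inner v)"
  shows "stable_tree n E" "inner E = V"
proof -
  show inner: "inner E = V" unfolding inner_def vertices by auto
  have card_vertices: "card (\<Union>E) = n + card V"
    unfolding vertices using \<open>finite V\<close>
    by (subst card_Un_disjoint) (auto simp: card_image inj_on_def)
  show "stable_tree n E"
    unfolding stable_tree_def is_tree_def
    using assms inner card_vertices connected_on_from_root[OF assms(3)] by auto
qed

subsection \<open>Trees with two or three internal vertices\<close>

lemma finite_partition_parts:
  fixes B C :: "nat set"
  assumes "B \<union> C = {1..n}"
  shows "finite B" "finite C"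
proof -
  have "finite (B \<union> C)" unfolding assms by (rule finite_atLeastAtMost)
  then show "finite B" "finite C" by simp_all
qed

lemma card_partition:
  fixes B C :: "nat set"
  assumes "B \<inter> C = {}" "B \<union> C = {1..n}"
  shows "card B + card C = n"
  using assms finite_partition_parts[OF assms(2)]
  by (metis card_Un_disjoint card_atLeastAtMost diff_Suc_1)

lemma Collect_mem_insert_conj:
  "{e \<in> insert f F. P e} = (if P f then insert f {e \<in> F. P e} else {e \<in> F. P e})"
  by auto

lemma Collect_mem_Un_conj: "{e \<in> A \<union> B. P e} = {e \<in> A. P e} \<union> {e \<in> B. P e}"
  by auto

definition leaf_star :: "nat \<Rightarrow> nat set \<Rightarrow> node set set" where
  "leaf_star x B = (\<lambda>i. {Leaf i, Inner x}) ` B"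

definition two_vertex_tree :: "nat set \<Rightarrow> nat set \<Rightarrow> nat \<Rightarrow> nat \<Rightarrow> node set set" where
  "two_vertex_tree B C x y = insert {Inner x, Inner y} (leaf_star x B \<union> leaf_star y C)"

definition three_vertex_tree ::
    "nat set \<Rightarrow> nat set \<Rightarrow> nat set \<Rightarrow> nat \<Rightarrow> nat \<Rightarrow> nat \<Rightarrow> node set set" where
  "three_vertex_tree A M C a b c =
     insert {Inner a, Inner b} (insert {Inner b, Inner c}
       (leaf_star a A \<union> leaf_star b M \<union> leaf_star c C))"

lemma mem_leaf_star: "e \<in> leaf_star x B \<longleftrightarrow> (\<exists>i\<in>B. e = {Leaf i, Inner x})"
  unfolding leaf_star_def by auto

lemma leaf_edge_in_leaf_star [simp]:
  "{Leaf i, Inner x} \<in> leaf_star x B \<longleftrightarrow> i \<in> B"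
  "{Inner x, Leaf i} \<in> leaf_star x B \<longleftrightarrow> i \<in> B"
  unfolding leaf_star_def by (auto simp: doubleton_eq_iff)

lemma inner_edge_notin_leaf_star [simp]: "{Inner a, Inner b} \<notin> leaf_star x B"
  unfolding leaf_star_def by (auto simp: doubleton_eq_iff)

lemma card_leaf_star [simp]: "card (leaf_star x B) = card B"
  unfolding leaf_star_def by (rule card_image) (auto simp: inj_on_def doubleton_eq_iff)

lemma finite_leaf_star [simp]: "finite B \<Longrightarrow> finite (leaf_star x B)"
  unfolding leaf_star_def by simp

lemma Union_leaf_star [simp]: "B \<noteq> {} \<Longrightarrow> \<Union>(leaf_star x B) = Leaf ` B \<union> {Inner x}"
  unfolding leaf_star_def by auto

lemma leaf_star_Un: "leaf_star x (A \<union> B) = leaf_star x A \<union> leaf_star x B"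
  unfolding leaf_star_def by (rule image_Un)

lemma leaf_stars_disjoint [simp]: "B \<inter> C = {} \<Longrightarrow> leaf_star x B \<inter> leaf_star y C = {}"
  unfolding leaf_star_def by (auto simp: doubleton_eq_iff)

lemma leaf_star_incident_Leaf [simp]:
  "{e \<in> leaf_star x B. Leaf i \<in> e} = (if i \<in> B then {{Leaf i, Inner x}} else {})"
  unfolding leaf_star_def by (auto simp: doubleton_eq_iff)

lemma leaf_star_incident_Inner [simp]:
  "{e \<in> leaf_star x B. Inner u \<in> e} = (if u = x then leaf_star x B else {})"
  unfolding leaf_star_def by auto

lemma rtrancl_adj_leaf_star:
  assumes "(r, Inner x) \<in> (adj E)\<^sup>*" "leaf_star x B \<subseteq> E" "i \<in> B"
  shows "(r, Leaf i) \<in> (adj E)\<^sup>*"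
  by (rule rtrancl_adj_edge_step[OF assms(1)]) (use assms in \<open>auto simp: leaf_star_def\<close>)

lemma two_vertex_tree_stable:
  assumes "x \<noteq> y" and partition: "B \<inter> C = {}" "B \<union> C = {1..n}"
    and "2 \<le> card B" "2 \<le> card C"
  shows "stable_tree n (two_vertex_tree B C x y)" "inner (two_vertex_tree B C x y) = {x, y}"
proof -
  let ?E = "two_vertex_tree B C x y"
  note finite = finite_partition_parts[OF partition(2)]
  have "B \<noteq> {}" "C \<noteq> {}" using assms by auto
  then have vertices: "\<Union>?E = Leaf ` {1..n} \<union> Inner ` {x, y}"
    unfolding two_vertex_tree_def partition(2)[symmetric] by auto
  have "card ?E = card B + card C + 1"
    unfolding two_vertex_tree_def using finite partition by (simp add: card_Un_disjoint)
  then have card_edges: "card ?E + 1 = n + card {x, y}"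
    using card_partition[OF partition] \<open>x \<noteq> y\<close> by simp
  have reachable: "\<forall>z\<in>\<Union>?E. (Inner x, z) \<in> (adj ?E)\<^sup>*"
    unfolding vertices partition(2)[symmetric]
    by (auto simp: two_vertex_tree_def intro: rtrancl_adj_edge rtrancl_adj_edge_step)
  have incident: "{e \<in> ?E. Inner x \<in> e} = insert {Inner x, Inner y} (leaf_star x B)"
    "{e \<in> ?E. Inner y \<in> e} = insert {Inner x, Inner y} (leaf_star y C)"
    unfolding two_vertex_tree_def Collect_mem_insert_conj Collect_mem_Un_conj
    using \<open>x \<noteq> y\<close> by auto
  have "deg ?E (Inner x) \<ge> 3" "deg ?E (Inner y) \<ge> 3"
    unfolding deg_def incident using assms finite by simp_all
  moreover have "\<forall>i\<in>{1..n}. deg ?E (Leaf i) = 1"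
    using partition
    unfolding deg_def two_vertex_tree_def Collect_mem_insert_conj Collect_mem_Un_conj
    by auto
  moreover have "finite ?E" "\<forall>e\<in>?E. card e = 2"
    using finite \<open>x \<noteq> y\<close> by (auto simp: two_vertex_tree_def mem_leaf_star)
  ultimately show "stable_tree n ?E" "inner ?E = {x, y}"
    using stable_treeI[OF _ _ reachable vertices _ card_edges] by auto
qed

lemma three_vertex_tree_stable:
  assumes distinct: "a \<noteq> b" "b \<noteq> c" "a \<noteq> c"
    and partition: "A \<inter> M = {}" "A \<inter> C = {}" "M \<inter> C = {}" "A \<union> M \<union> C = {1..n}"
    and "2 \<le> card A" "M \<noteq> {}" "2 \<le> card C"
  shows "stable_tree n (three_vertex_tree A M C a b c)"
    "inner (three_vertex_tree A M C a b c) = {a, b, c}"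
proof -
  let ?E = "three_vertex_tree A M C a b c"
  have finite: "finite A" "finite M" "finite C"
    using finite_partition_parts[OF partition(4)] by auto
  have "A \<noteq> {}" "C \<noteq> {}" using assms by auto
  then have vertices: "\<Union>?E = Leaf ` {1..n} \<union> Inner ` {a, b, c}"
    unfolding three_vertex_tree_def partition(4)[symmetric] using \<open>M \<noteq> {}\<close> by auto
  have "card ?E = card A + card M + card C + 2"
    unfolding three_vertex_tree_def using finite partition distinct
    by (simp add: card_Un_disjoint doubleton_eq_iff Int_Un_distrib2)
  moreover have "card A + card M + card C = n"
    using card_partition[OF _ partition(4)] partition finite by (simp add: card_Un_disjoint Int_Un_distrib2)
  ultimately have card_edges: "card ?E + 1 = n + card {a, b, c}"
    using distinct by simp
  have to_b: "(Inner a, Inner b) \<in> (adj ?E)\<^sup>*"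
    by (rule rtrancl_adj_edge) (simp add: three_vertex_tree_def)
  have to_c: "(Inner a, Inner c) \<in> (adj ?E)\<^sup>*"
    by (rule rtrancl_adj_edge_step[OF to_b]) (simp add: three_vertex_tree_def)
  have stars: "leaf_star a A \<subseteq> ?E" "leaf_star b M \<subseteq> ?E" "leaf_star c C \<subseteq> ?E"
    by (auto simp: three_vertex_tree_def)
  have "(Inner a, Leaf i) \<in> (adj ?E)\<^sup>*" if "i \<in> A \<union> M \<union> C" for i
    using that rtrancl_adj_leaf_star[OF rtrancl_refl stars(1)]
      rtrancl_adj_leaf_star[OF to_b stars(2)] rtrancl_adj_leaf_star[OF to_c stars(3)]
    by blast
  then have reachable: "\<forall>z\<in>\<Union>?E. (Inner a, z) \<in> (adj ?E)\<^sup>*"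
    unfolding vertices partition(4)[symmetric] using to_b to_c by auto
  have incident: "{e \<in> ?E. Inner a \<in> e} = insert {Inner a, Inner b} (leaf_star a A)"
    "{e \<in> ?E. Inner b \<in> e} = {{Inner a, Inner b}, {Inner b, Inner c}} \<union> leaf_star b M"
    "{e \<in> ?E. Inner c \<in> e} = insert {Inner b, Inner c} (leaf_star c C)"
    unfolding three_vertex_tree_def Collect_mem_insert_conj Collect_mem_Un_conj
    using distinct by auto
  have "deg ?E (Inner a) \<ge> 3" "deg ?E (Inner c) \<ge> 3"
    unfolding deg_def incident using assms finite by simp_all
  moreover have "deg ?E (Inner b) \<ge> 3"
    unfolding deg_def incident using distinct finite \<open>M \<noteq> {}\<close>
    by (simp add: card_Un_disjoint doubleton_eq_iff Suc_leI card_gt_0_iff)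
  moreover have "\<forall>i\<in>{1..n}. deg ?E (Leaf i) = 1"
    using partition
    unfolding deg_def three_vertex_tree_def Collect_mem_insert_conj Collect_mem_Un_conj
    by auto
  moreover have "finite ?E" "\<forall>e\<in>?E. card e = 2"
    using finite distinct by (auto simp: three_vertex_tree_def mem_leaf_star)
  ultimately show "stable_tree n ?E" "inner ?E = {a, b, c}"
    using stable_treeI[OF _ _ reachable vertices _ card_edges] by auto
qed

lemma two_vertex_tree_leaf_neighbours:
  assumes "x \<noteq> y" "B \<inter> C = {}"
  shows "{i. {Leaf i, Inner x} \<in> two_vertex_tree B C x y} = B"
  unfolding two_vertex_tree_def using assms by (auto simp: mem_leaf_star doubleton_eq_iff)

lemma two_vertex_tree_swap: "two_vertex_tree B C x y = two_vertex_tree C B y x"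
  unfolding two_vertex_tree_def by (auto simp: insert_commute)

lemma deg_Inner_le_two_inner:
  assumes "finite E" "\<forall>e\<in>E. card e = 2" "inner E \<subseteq> {v, w}"
  shows "deg E (Inner v) \<le> card {i. {Leaf i, Inner v} \<in> E} + card ({{Inner v, Inner w}} \<inter> E)"
proof -
  let ?B = "{i. {Leaf i, Inner v} \<in> E}"
  have "{e \<in> E. Inner v \<in> e} \<subseteq> leaf_star v ?B \<union> ({{Inner v, Inner w}} \<inter> E)"
  proof
    fix e assume e: "e \<in> {e \<in> E. Inner v \<in> e}"
    have "card e = 2" "Inner v \<in> e" using e assms(2) by auto
    then obtain z where z: "e = {Inner v, z}" "z \<noteq> Inner v"
      by (auto simp: card_2_iff doubleton_eq_iff)
    show "e \<in> leaf_star v ?B \<union> ({{Inner v, Inner w}} \<inter> E)"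
    proof (cases z)
      case (Leaf i)
      then show ?thesis using e z by (auto simp: insert_commute)
    next
      case (Inner u)
      then have "u \<in> inner E" using e z unfolding inner_def by auto
      then show ?thesis using assms(3) e z Inner by auto
    qed
  qed
  moreover have "leaf_star v ?B \<subseteq> E"
    by (auto simp: mem_leaf_star)
  ultimately have "deg E (Inner v) \<le> card (leaf_star v ?B \<union> ({{Inner v, Inner w}} \<inter> E))"
    unfolding deg_def using assms(1) by (intro card_mono) (auto intro: finite_subset)
  also have "\<dots> \<le> card (leaf_star v ?B) + card ({{Inner v, Inner w}} \<inter> E)"
    by (rule card_Un_le)
  finally show ?thesis
    by simp
qed

lemma stable_tree_two_inner_obtain:
  assumes "stable_tree n E" "inner E = {v, w}" "v \<noteq> w"
  obtains B C where "E = two_vertex_tree B C v w" "B \<inter> C = {}" "B \<union> C = {1..n}"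
    "2 \<le> card B" "2 \<le> card C"
proof -
  define Bv where "Bv = {i. {Leaf i, Inner v} \<in> E}"
  define Bw where "Bw = {i. {Leaf i, Inner w} \<in> E}"
  define k where "k = card ({{Inner v, Inner w}} \<inter> E)"
  note finite = stable_tree_finite[OF assms(1)]
  have leaves: "{i. Leaf i \<in> \<Union>E} = {1..n}" and leaf_deg: "\<forall>i\<in>{1..n}. deg E (Leaf i) = 1"
    and inner_deg: "\<forall>u\<in>inner E. 3 \<le> deg E (Inner u)"
    using assms(1) unfolding stable_tree_def by auto
  have subset: "Bv \<subseteq> {1..n}" "Bw \<subseteq> {1..n}"
    unfolding Bv_def Bw_def leaves[symmetric] by blast+
  have disjoint: "Bv \<inter> Bw = {}"
  proof (rule ccontr)
    assume "Bv \<inter> Bw \<noteq> {}"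
    then obtain i where i: "i \<in> Bv" "i \<in> Bw" by auto
    then have "{{Leaf i, Inner v}, {Leaf i, Inner w}} \<subseteq> {e \<in> E. Leaf i \<in> e}"
      unfolding Bv_def Bw_def by auto
    then have "card {{Leaf i, Inner v}, {Leaf i, Inner w}} \<le> deg E (Leaf i)"
      unfolding deg_def using finite by (intro card_mono) auto
    then show False
      using leaf_deg i subset assms(3) by (auto simp: doubleton_eq_iff)
  qed
  txt \<open>The degrees of \<open>v\<close> and \<open>w\<close> add up to \<open>n + 2\<close>, but each is at most its number
    of leaf neighbours plus \<open>k \<le> 1\<close>; hence \<open>k = 1\<close> and every leaf hangs at \<open>v\<close> or \<open>w\<close>.\<close>
  have deg_v: "deg E (Inner v) \<le> card Bv + k"
    using deg_Inner_le_two_inner[OF finite(1,2)] assms(2) unfolding Bv_def k_def by simp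
  have deg_w: "deg E (Inner w) \<le> card Bw + k"
    using deg_Inner_le_two_inner[OF finite(1,2), of w v] assms(2)
    unfolding Bw_def k_def by (simp add: insert_commute)
  have "deg E (Inner v) + deg E (Inner w) = n + 2"
    using stable_tree_inner_degree_sum[OF assms(1)] assms(2,3) by simp
  moreover have "card Bv + card Bw \<le> n"
    using subset disjoint card_mono[of "{1..n}" "Bv \<union> Bw"] finite_subset[OF subset(1)]
      finite_subset[OF subset(2)] by (simp add: card_Un_disjoint)
  moreover have "k \<le> 1"
    unfolding k_def by (simp add: card_le_Suc0_iff_eq)
  ultimately have "k = 1" and card_sum: "card Bv + card Bw = n"
    using deg_v deg_w by linarith+
  then have edge_vw: "{Inner v, Inner w} \<in> E"
    unfolding k_def by (cases "{Inner v, Inner w} \<in> E") auto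
  have cover: "Bv \<union> Bw = {1..n}"
    using card_sum subset disjoint finite_subset[OF subset(1)] finite_subset[OF subset(2)]
    by (intro card_subset_eq) (auto simp: card_Un_disjoint)
  have card_B: "2 \<le> card Bv" "2 \<le> card Bw"
    using inner_deg deg_v deg_w assms(2) \<open>k = 1\<close> by auto
  note tree = two_vertex_tree_stable[OF assms(3) disjoint cover card_B]
  have "two_vertex_tree Bv Bw v w \<subseteq> E"
    using edge_vw unfolding two_vertex_tree_def Bv_def Bw_def by (auto simp: mem_leaf_star)
  moreover have "card (two_vertex_tree Bv Bw v w) = card E"
    using stable_tree_card_edges[OF tree(1)] stable_tree_card_edges[OF assms(1)] tree(2) assms(2)
    by simp
  ultimately have "E = two_vertex_tree Bv Bw v w"
    using finite(1) by (metis card_subset_eq)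
  then show ?thesis
    using that disjoint cover card_B by blast
qed

subsection \<open>Contractions between these trees\<close>

definition contracted_edges :: "(nat \<Rightarrow> nat) \<Rightarrow> node set set \<Rightarrow> node set set" where
  "contracted_edges \<pi> E = {lift \<pi> ` e | e. e \<in> E \<and> card (lift \<pi> ` e) = 2}"

lemma contracts_iff:
  "contracts n E E' \<pi> \<longleftrightarrow> stable_tree n E \<and> stable_tree n E' \<and> \<pi> ` inner E = inner E'
     \<and> (\<forall>v'\<in>inner E'. connected_on E (Inner ` {v \<in> inner E. \<pi> v = v'}))
     \<and> E' = contracted_edges \<pi> E"
  unfolding contracts_def contracted_edges_def ..

lemma contracts_image_inner: "contracts n E E' \<pi> \<Longrightarrow> v \<in> inner E \<Longrightarrow> \<pi> v \<in> inner E'"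
  unfolding contracts_def by blast

lemma contracted_edges_Un:
  "contracted_edges \<pi> (E \<union> F) = contracted_edges \<pi> E \<union> contracted_edges \<pi> F"
  unfolding contracted_edges_def by blast

lemma contracted_edges_insert:
  "contracted_edges \<pi> (insert e E) =
     (if card (lift \<pi> ` e) = 2 then insert (lift \<pi> ` e) (contracted_edges \<pi> E)
      else contracted_edges \<pi> E)"
  unfolding contracted_edges_def by auto

lemma contracted_edges_insert_inner_edge:
  "contracted_edges \<pi> (insert {Inner a, Inner b} E) =
     (if \<pi> a = \<pi> b then contracted_edges \<pi> E
      else insert {Inner (\<pi> a), Inner (\<pi> b)} (contracted_edges \<pi> E))"
  by (simp add: contracted_edges_insert)

lemma contracted_edges_leaf_star: "contracted_edges \<pi> (leaf_star x B) = leaf_star (\<pi> x) B"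
  unfolding contracted_edges_def leaf_star_def
  by (auto intro!: exI[of _ "{Leaf i, Inner x}" for i])

lemma contracts_three_vertex_tree_merge_left:
  assumes distinct: "a \<noteq> b" "b \<noteq> c" "a \<noteq> c" and "x \<noteq> y"
    and partition: "A \<inter> M = {}" "A \<inter> C = {}" "M \<inter> C = {}" "A \<union> M \<union> C = {1..n}"
    and card: "2 \<le> card A" "M \<noteq> {}" "2 \<le> card C"
  shows "contracts n (three_vertex_tree A M C a b c) (two_vertex_tree (A \<union> M) C x y)
           (\<lambda>u. if u = c then y else x)"
proof -
  let ?T = "three_vertex_tree A M C a b c" and ?\<pi> = "\<lambda>u. if u = c then y else x"
  note three = three_vertex_tree_stable[OF distinct partition card]
  have "2 \<le> card (A \<union> M)"
    using card finite_partition_parts[OF partition(4)] by (meson card_mono finite_Un le_trans sup_ge1)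
  then have two: "stable_tree n (two_vertex_tree (A \<union> M) C x y)"
    "inner (two_vertex_tree (A \<union> M) C x y) = {x, y}"
    using two_vertex_tree_stable[OF \<open>x \<noteq> y\<close> _ partition(4) _ card(3)] partition by auto
  have fibres: "Inner ` {v \<in> inner ?T. ?\<pi> v = x} = {Inner a, Inner b}"
    "Inner ` {v \<in> inner ?T. ?\<pi> v = y} = {Inner c}"
    using three(2) distinct \<open>x \<noteq> y\<close> by auto
  have "{Inner a, Inner b} \<in> ?T" by (simp add: three_vertex_tree_def)
  then have "\<forall>v'\<in>{x, y}. connected_on ?T (Inner ` {v \<in> inner ?T. ?\<pi> v = v'})"
    using fibres connected_on_edge connected_on_singleton by auto
  moreover have "contracted_edges ?\<pi> ?T = two_vertex_tree (A \<union> M) C x y"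
    using distinct \<open>x \<noteq> y\<close>
    by (simp add: three_vertex_tree_def two_vertex_tree_def contracted_edges_Un leaf_star_Un
        contracted_edges_insert_inner_edge contracted_edges_leaf_star)
  ultimately show ?thesis
    unfolding contracts_iff using three two distinct by auto
qed

lemma three_vertex_tree_swap: "three_vertex_tree A M C a b c = three_vertex_tree C M A c b a"
  unfolding three_vertex_tree_def by (auto simp: insert_commute)

lemma contracts_three_vertex_tree_merge_right:
  assumes distinct: "a \<noteq> b" "b \<noteq> c" "a \<noteq> c" and "x \<noteq> y"
    and partition: "A \<inter> M = {}" "A \<inter> C = {}" "M \<inter> C = {}" "A \<union> M \<union> C = {1..n}"
    and card: "2 \<le> card A" "M \<noteq> {}" "2 \<le> card C"
  shows "contracts n (three_vertex_tree A M C a b c) (two_vertex_tree A (M \<union> C) x y)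
           (\<lambda>u. if u = a then x else y)"
proof -
  have "contracts n (three_vertex_tree C M A c b a) (two_vertex_tree (C \<union> M) A y x)
          (\<lambda>u. if u = a then x else y)"
    by (rule contracts_three_vertex_tree_merge_left) (use assms in auto)
  then show ?thesis
    by (simp add: three_vertex_tree_swap[of A] two_vertex_tree_swap[of A] Un_commute)
qed

lemma contracts_two_vertex_tree_rename:
  assumes "x \<noteq> y" "x' \<noteq> y'" and partition: "B \<inter> C = {}" "B \<union> C = {1..n}"
    and card: "2 \<le> card B" "2 \<le> card C"
  shows "contracts n (two_vertex_tree B C x y) (two_vertex_tree B C x' y')
           (\<lambda>u. if u = x then x' else y')"
proof -
  let ?T = "two_vertex_tree B C x y" and ?\<pi> = "\<lambda>u. if u = x then x' else y'"
  note old = two_vertex_tree_stable[OF \<open>x \<noteq> y\<close> partition card]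
    and new = two_vertex_tree_stable[OF \<open>x' \<noteq> y'\<close> partition card]
  have "Inner ` {v \<in> inner ?T. ?\<pi> v = x'} = {Inner x}"
    "Inner ` {v \<in> inner ?T. ?\<pi> v = y'} = {Inner y}"
    using old(2) assms(1,2) by auto
  then have "\<forall>v'\<in>{x', y'}. connected_on ?T (Inner ` {v \<in> inner ?T. ?\<pi> v = v'})"
    using connected_on_singleton by auto
  moreover have "contracted_edges ?\<pi> ?T = two_vertex_tree B C x' y'"
    using assms(1,2)
    by (simp add: two_vertex_tree_def contracted_edges_Un contracted_edges_insert_inner_edge
        contracted_edges_leaf_star)
  ultimately show ?thesis
    unfolding contracts_iff using old new assms(1) by auto
qed

subsection \<open>Extremal assignments\<close>

lemma extremal_assignment_proper:
  assumes "extremal_assignment n Z" "stable_tree n E"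
  shows "Z E \<subseteq> inner E" "\<not> inner E \<subseteq> Z E"
  using assms unfolding extremal_assignment_def by auto

lemma extremal_assignment_contracts_pull:
  assumes "extremal_assignment n Z" "contracts n E E' \<pi>" "v \<in> inner E" "\<pi> v \<in> Z E'"
  shows "v \<in> Z E"
  using assms contracts_image_inner[OF assms(2,3)] unfolding extremal_assignment_def by blast

lemma extremal_assignment_contracts_push:
  assumes "extremal_assignment n Z" "contracts n E E' \<pi>" "v \<in> inner E"
    and "\<forall>u\<in>inner E. \<pi> u = \<pi> v \<longrightarrow> u \<in> Z E"
  shows "\<pi> v \<in> Z E'"
  using assms contracts_image_inner[OF assms(2,3)] unfolding extremal_assignment_def by blast

lemma extremal_assignment_two_vertex_tree_rename:
  assumes Z: "extremal_assignment n Z" and "x \<noteq> y" "x' \<noteq> y'"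
    and partition: "B \<inter> C = {}" "B \<union> C = {1..n}" and card: "2 \<le> card B" "2 \<le> card C"
    and "x \<in> Z (two_vertex_tree B C x y)"
  shows "x' \<in> Z (two_vertex_tree B C x' y')"
  using extremal_assignment_contracts_push[OF Z
      contracts_two_vertex_tree_rename[OF \<open>x \<noteq> y\<close> \<open>x' \<noteq> y'\<close> partition card], of x]
    two_vertex_tree_stable(2)[OF \<open>x \<noteq> y\<close> partition card] assms(2,3,8)
  by auto

text \<open>The names \<open>0\<close>, \<open>1\<close> of the internal vertices are immaterial, by
  \<open>extremal_assignment_two_vertex_tree_rename\<close>.\<close>

definition assigned_side :: "nat \<Rightarrow> (node set set \<Rightarrow> nat set) \<Rightarrow> nat set \<Rightarrow> bool" where
  "assigned_side n Z B \<longleftrightarrow> B \<subseteq> {1..n} \<and> 2 \<le> card B \<and> 2 \<le> card ({1..n} - B)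
     \<and> 0 \<in> Z (two_vertex_tree B ({1..n} - B) 0 1)"

lemma assigned_side_iff:
  assumes Z: "extremal_assignment n Z"
  shows "(\<exists>E v. stable_tree n E \<and> card (inner E) = 2 \<and> v \<in> Z E \<and> B = {i. {Leaf i, Inner v} \<in> E})
    \<longleftrightarrow> assigned_side n Z B"
proof
  assume "\<exists>E v. stable_tree n E \<and> card (inner E) = 2 \<and> v \<in> Z E \<and> B = {i. {Leaf i, Inner v} \<in> E}"
  then obtain E v where E: "stable_tree n E" "card (inner E) = 2" "v \<in> Z E"
    and B: "B = {i. {Leaf i, Inner v} \<in> E}"
    by blast
  have "v \<in> inner E"
    using extremal_assignment_proper(1)[OF Z E(1)] E(3) by auto
  moreover have "card (inner E - {v}) = 1"
    using E(2) \<open>v \<in> inner E\<close> by (simp add: card_Diff_singleton_if)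
  then obtain w where "inner E - {v} = {w}"
    by (rule card_1_singletonE)
  ultimately have inner: "inner E = {v, w}" "v \<noteq> w"
    by auto
  obtain B' C where E_eq: "E = two_vertex_tree B' C v w" and partition: "B' \<inter> C = {}" "B' \<union> C = {1..n}"
    and card: "2 \<le> card B'" "2 \<le> card C"
    using stable_tree_two_inner_obtain[OF E(1) inner] .
  have "B = B'"
    unfolding B E_eq using two_vertex_tree_leaf_neighbours[OF inner(2) partition(1)] .
  moreover have "C = {1..n} - B'"
    using partition by blast
  moreover have "0 \<in> Z (two_vertex_tree B' C 0 1)"
    by (rule extremal_assignment_two_vertex_tree_rename[OF Z inner(2) zero_neq_one partition card])
      (use E(3) E_eq in simp)
  ultimately show "assigned_side n Z B"
    unfolding assigned_side_def using partition(2) card by blast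
next
  assume "assigned_side n Z B"
  then have partition: "B \<inter> ({1..n} - B) = {}" "B \<union> ({1..n} - B) = {1..n}"
    and card: "2 \<le> card B" "2 \<le> card ({1..n} - B)"
    and assigned: "0 \<in> Z (two_vertex_tree B ({1..n} - B) 0 1)"
    unfolding assigned_side_def by auto
  note tree = two_vertex_tree_stable[OF zero_neq_one partition card]
  show "\<exists>E v. stable_tree n E \<and> card (inner E) = 2 \<and> v \<in> Z E \<and> B = {i. {Leaf i, Inner v} \<in> E}"
    using tree assigned two_vertex_tree_leaf_neighbours[OF zero_neq_one partition(1)]
    by (intro exI[of _ "two_vertex_tree B ({1..n} - B) 0 1"] exI[of _ 0]) simp
qed

lemma assigned_side_card:
  assumes "assigned_side n Z B"
  shows "B \<subseteq> {1..n}" "2 \<le> card B" "card B \<le> n - 2"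
proof -
  show "B \<subseteq> {1..n}" "2 \<le> card B"
    using assms unfolding assigned_side_def by auto
  moreover have "card B + card ({1..n} - B) = n"
    by (rule card_partition) (use \<open>B \<subseteq> {1..n}\<close> in auto)
  ultimately show "card B \<le> n - 2"
    using assms unfolding assigned_side_def by linarith
qed

lemma assigned_side_subset:
  assumes Z: "extremal_assignment n Z" and B: "assigned_side n Z B"
    and "B' \<subseteq> B" "2 \<le> card B'"
  shows "assigned_side n Z B'"
proof (cases "B' = B")
  case False
  define M where "M = B - B'"
  define C where "C = {1..n} - B"
  have partition: "B' \<inter> M = {}" "B' \<inter> C = {}" "M \<inter> C = {}" "B' \<union> M \<union> C = {1..n}"
    and "M \<noteq> {}" and card_C: "2 \<le> card C"
    using B \<open>B' \<subseteq> B\<close> False unfolding M_def C_def assigned_side_def by auto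
  note card = \<open>2 \<le> card B'\<close> \<open>M \<noteq> {}\<close> card_C
  let ?T = "three_vertex_tree B' M C 0 1 2"
  note tree = three_vertex_tree_stable[OF _ _ _ partition card]
  have "B' \<union> M = B" "M \<union> C = {1..n} - B'"
    using \<open>B' \<subseteq> B\<close> B unfolding M_def C_def assigned_side_def by auto
  then have left: "contracts n ?T (two_vertex_tree B C 0 1) (\<lambda>u. if u = 2 then 1 else 0)"
    and right: "contracts n ?T (two_vertex_tree B' ({1..n} - B') 0 1) (\<lambda>u. if u = 0 then 0 else 1)"
    using contracts_three_vertex_tree_merge_left[OF _ _ _ _ partition card, of 0 1 2 0 1]
      contracts_three_vertex_tree_merge_right[OF _ _ _ _ partition card, of 0 1 2 0 1]
    by simp_all
  have "0 \<in> Z ?T"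
    using extremal_assignment_contracts_pull[OF Z left, of 0] B tree(2)
    unfolding assigned_side_def C_def by simp
  then have "0 \<in> Z (two_vertex_tree B' ({1..n} - B') 0 1)"
    using extremal_assignment_contracts_push[OF Z right, of 0] tree(2) by simp
  moreover have "2 \<le> card ({1..n} - B')"
    using card_C card_mono[of "{1..n} - B'" C] \<open>M \<union> C = {1..n} - B'\<close>
    by (metis finite_Diff finite_atLeastAtMost le_trans sup_ge2)
  ultimately show ?thesis
    using assms(3,4) B unfolding assigned_side_def by blast
qed (use B in simp)

lemma assigned_sides_not_cover:
  assumes Z: "extremal_assignment n Z" and B1: "assigned_side n Z B1" and B2: "assigned_side n Z B2"
  shows "B1 \<union> B2 \<noteq> {1..n}"
proof
  assume cover: "B1 \<union> B2 = {1..n}"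
  define C1 where "C1 = {1..n} - B1"
  define C2 where "C2 = {1..n} - B2"
  have partition1: "B1 \<inter> C1 = {}" "B1 \<union> C1 = {1..n}" and card1: "2 \<le> card B1" "2 \<le> card C1"
    and assigned1: "0 \<in> Z (two_vertex_tree B1 C1 0 1)"
    using B1 unfolding C1_def assigned_side_def by auto
  have partition2: "B2 \<inter> C2 = {}" "B2 \<union> C2 = {1..n}" and card2: "2 \<le> card B2" "2 \<le> card C2"
    and assigned2: "0 \<in> Z (two_vertex_tree B2 C2 0 1)"
    using B2 unfolding C2_def assigned_side_def by auto
  show False
  proof (cases "C1 = B2")
    case True
    moreover have "B1 = C2"
      using True partition1 partition2 unfolding C1_def C2_def by blast
    ultimately have "two_vertex_tree B1 C1 1 0 = two_vertex_tree B2 C2 0 1"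
      using two_vertex_tree_swap by metis
    moreover have "1 \<in> Z (two_vertex_tree B1 C1 1 0)"
      using extremal_assignment_two_vertex_tree_rename[OF Z zero_neq_one _ partition1 card1 assigned1]
      by simp
    moreover note tree = two_vertex_tree_stable[OF zero_neq_one partition2 card2]
    ultimately show False
      using assigned2 extremal_assignment_proper(2)[OF Z tree(1)] tree(2) by auto
  next
    case False
    define M where "M = B1 \<inter> B2"
    have partition: "C2 \<inter> M = {}" "C2 \<inter> C1 = {}" "M \<inter> C1 = {}" "C2 \<union> M \<union> C1 = {1..n}"
      and "M \<noteq> {}" and "C2 \<union> M = B1" "M \<union> C1 = B2"
      using False cover unfolding M_def C1_def C2_def by auto
    note card = card2(2) \<open>M \<noteq> {}\<close> card1(2)
    let ?T = "three_vertex_tree C2 M C1 0 1 2"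
    note tree = three_vertex_tree_stable[OF _ _ _ partition card]
    have left: "contracts n ?T (two_vertex_tree B1 C1 0 1) (\<lambda>u. if u = 2 then 1 else 0)"
      using contracts_three_vertex_tree_merge_left[OF _ _ _ _ partition card, of 0 1 2 0 1]
        \<open>C2 \<union> M = B1\<close> by simp
    have "contracts n ?T (two_vertex_tree C2 B2 1 0) (\<lambda>u. if u = 0 then 1 else 0)"
      using contracts_three_vertex_tree_merge_right[OF _ _ _ _ partition card, of 0 1 2 1 0]
        \<open>M \<union> C1 = B2\<close> by simp
    then have right: "contracts n ?T (two_vertex_tree B2 C2 0 1) (\<lambda>u. if u = 0 then 1 else 0)"
      by (simp only: two_vertex_tree_swap[of C2])
    have "0 \<in> Z ?T" "1 \<in> Z ?T"
      using extremal_assignment_contracts_pull[OF Z left] assigned1 tree(2) by simp_all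
    moreover have "2 \<in> Z ?T"
      using extremal_assignment_contracts_pull[OF Z right, of 2] assigned2 tree(2) by simp
    ultimately show False
      using extremal_assignment_proper(2)[OF Z tree(1)] tree(2) by auto
  qed
qed

theorem lemma7p6:
  fixes n :: nat and Z :: "node set set \<Rightarrow> nat set"
  assumes "extremal_assignment n Z"
  shows "contraction_indicator n
           {B. \<exists>E v. stable_tree n E \<and> card (inner E) = 2 \<and> v \<in> Z E
                    \<and> B = {i. {Leaf i, Inner v} \<in> E}}"
proof -
  have sides: "{B. \<exists>E v. stable_tree n E \<and> card (inner E) = 2 \<and> v \<in> Z E
                    \<and> B = {i. {Leaf i, Inner v} \<in> E}} = Collect (assigned_side n Z)"
    using assigned_side_iff[OF assms] by blast
  show ?thesis
    unfolding contraction_indicator_def sides mem_Collect_eq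
  proof (intro conjI)
    show "\<forall>B\<in>Collect (assigned_side n Z). B \<subseteq> {1..n} \<and> 2 \<le> card B \<and> card B \<le> n - 2"
      using assigned_side_card by blast
    show "\<forall>B\<in>Collect (assigned_side n Z). \<forall>B'. B' \<subseteq> B \<and> 2 \<le> card B' \<longrightarrow> assigned_side n Z B'"
      using assigned_side_subset[OF assms] by blast
    show "\<forall>B1\<in>Collect (assigned_side n Z). \<forall>B2\<in>Collect (assigned_side n Z). B1 \<union> B2 \<noteq> {1..n}"
      using assigned_sides_not_cover[OF assms] by blast
  qed
qed

end
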